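(* Along any solution of the Euler–Lagrange equations (i.e. $\Upsilon_k^n=0$ for all $k,n$), one has $\partial_{t^\ell}\mathscr L_k-\partial_{t^k}\mathscr L_\ell=\{H_k,H_\ell\}_R$. Consequently the closure relation $d\mathscr L=0$ on shell for the Lagrangian one-form $\mathscr L=\mathscr L_k\,dt^k$ is equivalent to the involutivity $\{H_k,H_\ell\}_R=0$ of the Hamiltonians with respect to the Lie–Poisson $R$-bracket.
   Context: Setting: $\mathfrak g$ complex matrix Lie algebra with dual $\mathfrak g^*$; $R:\mathfrak g\to\mathfrak g$ solves the modified classical Yang–Baxter equation $[RX,RY]-R([RX,Y]+[X,RY])=-[X,Y]$; $[X,Y]_R=\frac12([RX,Y]+[X,RY])$; $G_R$ the Lie group of $(\mathfrak g,[\cdot,\cdot]_R)$ with associative product $\cdot_R$; $\Lambda\in\mathfrak g^*$, $\mathcal O_\Lambda=\{\mathrm{Ad}^{R*}_\varphi\Lambda:\varphi\in G_R\}$; $\{f,g\}_R(\xi)=(\xi,[\nabla f,\nabla g]_R)$. For $\varphi:\mathbb R^N\to G_R$ and $L=\mathrm{Ad}^{R*}_\varphi\Lambda$, $\mathscr L_k=(L,\partial_{t^k}\varphi\cdot_R\varphi^{-1})-H_k(L)$ with smooth functions $H_k$ on $\mathfrak g^*$. With local coordinates $\xi_m$ on $\mathcal O_\Lambda$, Kostant–Kirillov–Souriau form $\omega_R=\omega_{mn}\delta\xi_m\wedge\delta\xi_n$ (antisymmetric $\omega_{mn}$, normalised so that its pullback to $G_R$ has coefficients $\partial\pi_\alpha/\partial\phi_\beta-\partial\pi_\beta/\partial\phi_\alpha$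 with $\pi_\alpha=(\Lambda,\varphi^{-1}\cdot_R\partial\varphi/\partial\phi_\alpha)$ in local coordinates $\phi_\alpha$ of $G_R$), the Euler–Lagrange equations of $\mathscr L_k$ are $\Upsilon_k^n:=\sum_m\omega_{mn}\partial_{t^k}\xi_m-\partial H_k/\partial\xi_n=0$. *)

theory Defs
  imports "HOL-Analysis.Analysis"
begin

fun dd :: "'a list \<Rightarrow> ('a::real_normed_vector \<Rightarrow> 'b::real_normed_vector) \<Rightarrow> 'a \<Rightarrow> 'b" where
  "dd [] f = f"
| "dd (v # vs) f = (\<lambda>x. frechet_derivative (dd vs f) (at x) v)"

definition smooth_on :: "'a::real_normed_vector set \<Rightarrow> ('a \<Rightarrow> 'b::real_normed_vector) \<Rightarrow> bool" where
  "smooth_on S f \<longleftrightarrow> (\<forall>vs. \<forall>x\<in>S. dd vs f differentiable (at x))"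

definition holo_scalar_on :: "(complex^'d) set \<Rightarrow> (complex^'d \<Rightarrow> complex) \<Rightarrow> bool" where
  "holo_scalar_on S f \<longleftrightarrow> smooth_on S f \<and>
     (\<forall>x\<in>S. \<forall>(c::complex) v. frechet_derivative f (at x) (c *s v) = c * frechet_derivative f (at x) v)"

definition holo_vec_on :: "(complex^'c) set \<Rightarrow> (complex^'c \<Rightarrow> complex^'d) \<Rightarrow> bool" where
  "holo_vec_on S f \<longleftrightarrow> smooth_on S f \<and>
     (\<forall>x\<in>S. \<forall>(c::complex) v. frechet_derivative f (at x) (c *s v) = c *s frechet_derivative f (at x) v)"

definition tpartial :: "(real^'N \<Rightarrow> 'b::real_normed_vector) \<Rightarrow> 'N \<Rightarrow> real^'N \<Rightarrow> 'b" where
  "tpartial f k t = frechet_derivative f (at t) (axis k 1)"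

definition msc :: "complex \<Rightarrow> complex^'n^'n \<Rightarrow> complex^'n^'n" where
  "msc c M = (\<chi> i j. c * M $ i $ j)"

definition comm :: "complex^'n^'n \<Rightarrow> complex^'n^'n \<Rightarrow> complex^'n^'n" where
  "comm X Y = X ** Y - Y ** X"

definition lincomb :: "('d::finite \<Rightarrow> complex^'n^'n) \<Rightarrow> complex^'d \<Rightarrow> complex^'n^'n" where
  "lincomb e c = (\<Sum>a\<in>UNIV. msc (c $ a) (e a))"

definition gset :: "('d::finite \<Rightarrow> complex^'n^'n) \<Rightarrow> (complex^'n^'n) set" where
  "gset e = range (lincomb e)"

definition coords :: "('d::finite \<Rightarrow> complex^'n^'n) \<Rightarrow> complex^'n^'n \<Rightarrow> complex^'d" where
  "coords e X = (THE c. lincomb e c = X)"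

definition matrix_lie_algebra_basis :: "('d::finite \<Rightarrow> complex^'n^'n) \<Rightarrow> bool" where
  "matrix_lie_algebra_basis e \<longleftrightarrow>
     (\<forall>c. lincomb e c = 0 \<longrightarrow> c = 0) \<and>
     (\<forall>X\<in>gset e. \<forall>Y\<in>gset e. comm X Y \<in> gset e)"

text \<open>Elements of the dual g* are represented by their components xi_a = (xi, e_a);
the pairing (xi, X).\<close>

definition pair :: "('d::finite \<Rightarrow> complex^'n^'n) \<Rightarrow> complex^'d \<Rightarrow> complex^'n^'n \<Rightarrow> complex" where
  "pair e \<xi> X = (\<Sum>a\<in>UNIV. \<xi> $ a * coords e X $ a)"

definition mCYBE :: "('d::finite \<Rightarrow> complex^'n^'n) \<Rightarrow> (complex^'n^'n \<Rightarrow> complex^'n^'n) \<Rightarrow> bool" where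
  "mCYBE e R \<longleftrightarrow>
     (\<forall>X\<in>gset e. R X \<in> gset e) \<and>
     (\<forall>X\<in>gset e. \<forall>Y\<in>gset e. R (X + Y) = R X + R Y) \<and>
     (\<forall>X\<in>gset e. \<forall>c. R (msc c X) = msc c (R X)) \<and>
     (\<forall>X\<in>gset e. \<forall>Y\<in>gset e.
        comm (R X) (R Y) - R (comm (R X) Y + comm X (R Y)) = - comm X Y)"

definition brR :: "(complex^'n^'n \<Rightarrow> complex^'n^'n) \<Rightarrow> complex^'n^'n \<Rightarrow> complex^'n^'n \<Rightarrow> complex^'n^'n" where
  "brR R X Y = msc (1/2) (comm (R X) Y + comm X (R Y))"

section \<open>The group G_R, realised by a faithful matrix representation rho of (g,[.,.]_R)\<close>

definition faithful_rep ::
  "('d::finite \<Rightarrow> complex^'n^'n) \<Rightarrow> (complex^'n^'n \<Rightarrow> complex^'n^'n) \<Rightarrow> (complex^'n^'n \<Rightarrow> complex^'m^'m) \<Rightarrow> bool" where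
  "faithful_rep e R \<rho> \<longleftrightarrow>
     inj_on \<rho> (gset e) \<and>
     (\<forall>X\<in>gset e. \<forall>Y\<in>gset e. \<rho> (X + Y) = \<rho> X + \<rho> Y) \<and>
     (\<forall>X\<in>gset e. \<forall>c. \<rho> (msc c X) = (\<chi> i j. c * \<rho> X $ i $ j)) \<and>
     (\<forall>X\<in>gset e. \<forall>Y\<in>gset e. \<rho> (brR R X Y) = \<rho> X ** \<rho> Y - \<rho> Y ** \<rho> X)"

text \<open>G_R: the connected matrix Lie group with Lie algebra rho(g): all matrices joined to
the identity by a C^1 path whose right Maurer--Cartan form lies in rho(g).
Its associative product (.)_R is matrix multiplication.\<close>

definition GR :: "('d::finite \<Rightarrow> complex^'n^'n) \<Rightarrow> (complex^'n^'n \<Rightarrow> complex^'m^'m) \<Rightarrow> (complex^'m^'m) set" where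
  "GR e \<rho> = {A. \<exists>\<gamma> \<gamma>'. \<gamma> 0 = mat 1 \<and> \<gamma> 1 = A \<and> continuous_on {0..1::real} \<gamma>' \<and>
      (\<forall>s\<in>{0..1}. (\<gamma> has_vector_derivative \<gamma>' s) (at s within {0..1}) \<and>
          invertible (\<gamma> s) \<and> \<gamma>' s ** matrix_inv (\<gamma> s) \<in> \<rho> ` gset e)}"

definition AdR :: "('d::finite \<Rightarrow> complex^'n^'n) \<Rightarrow> (complex^'n^'n \<Rightarrow> complex^'m^'m) \<Rightarrow> complex^'m^'m \<Rightarrow> complex^'n^'n \<Rightarrow> complex^'n^'n" where
  "AdR e \<rho> A X = inv_into (gset e) \<rho> (A ** \<rho> X ** matrix_inv A)"

definition coadR :: "('d::finite \<Rightarrow> complex^'n^'n) \<Rightarrow> (complex^'n^'n \<Rightarrow> complex^'m^'m) \<Rightarrow> complex^'m^'m \<Rightarrow> complex^'d \<Rightarrow> complex^'d" where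
  "coadR e \<rho> A \<Lambda> = (\<chi> a. pair e \<Lambda> (AdR e \<rho> (matrix_inv A) (e a)))"

definition orbitR :: "('d::finite \<Rightarrow> complex^'n^'n) \<Rightarrow> (complex^'n^'n \<Rightarrow> complex^'m^'m) \<Rightarrow> complex^'d \<Rightarrow> (complex^'d) set" where
  "orbitR e \<rho> \<Lambda> = (\<lambda>A. coadR e \<rho> A \<Lambda>) ` GR e \<rho>"

definition adstarR :: "('d::finite \<Rightarrow> complex^'n^'n) \<Rightarrow> (complex^'n^'n \<Rightarrow> complex^'n^'n) \<Rightarrow> complex^'n^'n \<Rightarrow> complex^'d \<Rightarrow> complex^'d" where
  "adstarR e R X \<xi> = (\<chi> a. pair e \<xi> (brR R (e a) X))"

definition grad :: "('d::finite \<Rightarrow> complex^'n^'n) \<Rightarrow> (complex^'d \<Rightarrow> complex) \<Rightarrow> complex^'d \<Rightarrow> complex^'n^'n" where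
  "grad e f \<xi> = lincomb e (\<chi> a. frechet_derivative f (at \<xi>) (axis a 1))"

definition PBR :: "('d::finite \<Rightarrow> complex^'n^'n) \<Rightarrow> (complex^'n^'n \<Rightarrow> complex^'n^'n) \<Rightarrow> (complex^'d \<Rightarrow> complex) \<Rightarrow> (complex^'d \<Rightarrow> complex) \<Rightarrow> complex^'d \<Rightarrow> complex" where
  "PBR e R f g \<xi> = pair e \<xi> (brR R (grad e f \<xi>) (grad e g \<xi>))"

text \<open>chi : U -> O_Lambda is a holomorphic local parametrisation (inverse of local
coordinates xi_m) of the coadjoint orbit.\<close>

definition orbit_chart ::
  "('d::finite \<Rightarrow> complex^'n^'n) \<Rightarrow> (complex^'n^'n \<Rightarrow> complex^'n^'n) \<Rightarrow> (complex^'n^'n \<Rightarrow> complex^'m^'m) \<Rightarrow> complex^'d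
    \<Rightarrow> (complex^'c) set \<Rightarrow> (complex^'c \<Rightarrow> complex^'d) \<Rightarrow> bool" where
  "orbit_chart e R \<rho> \<Lambda> U \<chi>' \<longleftrightarrow> open U \<and> holo_vec_on U \<chi>' \<and> inj_on \<chi>' U \<and> \<chi>' ` U \<subseteq> orbitR e \<rho> \<Lambda> \<and>
     (\<forall>u\<in>U. inj (frechet_derivative \<chi>' (at u)) \<and>
        range (frechet_derivative \<chi>' (at u)) = {adstarR e R X (\<chi>' u) | X. X \<in> gset e})"

text \<open>omega u m n: the (antisymmetric) coefficients of the KKS form omega_R =
omega_mn dxi_m /\ dxi_n in these coordinates, with the normalisation of the paper, i.e.
omega(ad*_X xi, ad*_Y xi) = (xi, [X,Y]_R).\<close>

definition KKS_coeffs ::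
  "('d::finite \<Rightarrow> complex^'n^'n) \<Rightarrow> (complex^'n^'n \<Rightarrow> complex^'n^'n) \<Rightarrow> (complex^'c) set \<Rightarrow> (complex^'c \<Rightarrow> complex^'d)
    \<Rightarrow> (complex^'c \<Rightarrow> 'c \<Rightarrow> 'c \<Rightarrow> complex) \<Rightarrow> bool" where
  "KKS_coeffs e R U \<chi>' \<omega> \<longleftrightarrow>
     (\<forall>u\<in>U. (\<forall>m n. \<omega> u m n = - \<omega> u n m) \<and>
        (\<forall>X\<in>gset e. \<forall>Y\<in>gset e. \<forall>v w.
           frechet_derivative \<chi>' (at u) v = adstarR e R X (\<chi>' u) \<longrightarrow>
           frechet_derivative \<chi>' (at u) w = adstarR e R Y (\<chi>' u) \<longrightarrow>
           (\<Sum>m\<in>UNIV. \<Sum>n\<in>UNIV. \<omega> u m n * v $ m * w $ n) = pair e (\<chi>' u) (brR R X Y)))"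

definition Lfield :: "('d::finite \<Rightarrow> complex^'n^'n) \<Rightarrow> (complex^'n^'n \<Rightarrow> complex^'m^'m) \<Rightarrow> complex^'d
    \<Rightarrow> (real^'N \<Rightarrow> complex^'m^'m) \<Rightarrow> real^'N \<Rightarrow> complex^'d" where
  "Lfield e \<rho> \<Lambda> \<phi> t = coadR e \<rho> (\<phi> t) \<Lambda>"

definition MC :: "('d::finite \<Rightarrow> complex^'n^'n) \<Rightarrow> (complex^'n^'n \<Rightarrow> complex^'m^'m)
    \<Rightarrow> (real^'N \<Rightarrow> complex^'m^'m) \<Rightarrow> 'N \<Rightarrow> real^'N \<Rightarrow> complex^'n^'n" where
  "MC e \<rho> \<phi> k t = inv_into (gset e) \<rho> (tpartial \<phi> k t ** matrix_inv (\<phi> t))"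

definition Lag :: "('d::finite \<Rightarrow> complex^'n^'n) \<Rightarrow> (complex^'n^'n \<Rightarrow> complex^'m^'m) \<Rightarrow> complex^'d
    \<Rightarrow> ('N \<Rightarrow> complex^'d \<Rightarrow> complex) \<Rightarrow> (real^'N \<Rightarrow> complex^'m^'m) \<Rightarrow> 'N \<Rightarrow> real^'N \<Rightarrow> complex" where
  "Lag e \<rho> \<Lambda> H \<phi> k t = pair e (Lfield e \<rho> \<Lambda> \<phi> t) (MC e \<rho> \<phi> k t) - H k (Lfield e \<rho> \<Lambda> \<phi> t)"

definition Upsilon :: "(complex^'c \<Rightarrow> complex^'d) \<Rightarrow> (complex^'c \<Rightarrow> 'c \<Rightarrow> 'c \<Rightarrow> complex)
    \<Rightarrow> ('N \<Rightarrow> complex^'d \<Rightarrow> complex) \<Rightarrow> (real^'N \<Rightarrow> complex^'c) \<Rightarrow> 'N \<Rightarrow> 'c \<Rightarrow> real^'N \<Rightarrow> complex" where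
  "Upsilon \<chi>' \<omega> H \<xi> k n t =
     (\<Sum>m\<in>UNIV. \<omega> (\<xi> t) m n * tpartial \<xi> k t $ m)
     - frechet_derivative (H k \<circ> \<chi>') (at (\<xi> t)) (axis n 1)"

end

theory Submission
  imports Defs
begin

text \<open>
  Write \<open>m\<^sub>k = \<partial>\<^sub>k\<phi> \<cdot>\<^sub>R \<phi>\<^sup>-\<^sup>1\<close> for the Maurer--Cartan form, so that
  \<open>\<L>\<^sub>k = (L, m\<^sub>k) - H\<^sub>k(L)\<close>. Two kinematic facts hold for any \<open>\<phi>\<close>: the orbit point
  \<open>L = Ad*\<^sub>\<phi> \<Lambda>\<close> moves by \<open>\<partial>\<^sub>k L = ad*(m\<^sub>k) L\<close>, and \<open>m\<close> has zero curvature,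
  \<open>\<partial>\<^sub>l m\<^sub>k - \<partial>\<^sub>k m\<^sub>l = [m\<^sub>l, m\<^sub>k]\<^sub>R\<close>, by the symmetry of second derivatives of \<open>\<phi>\<close>.
  Hence \<open>\<partial>\<^sub>l \<L>\<^sub>k - \<partial>\<^sub>k \<L>\<^sub>l = (L, [m\<^sub>l, m\<^sub>k]\<^sub>R) + T\<^sub>k\<^sub>l - T\<^sub>l\<^sub>k\<close> with
  \<open>T\<^sub>k\<^sub>l = (L, [m\<^sub>k, m\<^sub>l]\<^sub>R) - dH\<^sub>k(\<partial>\<^sub>l L)\<close>.
  The Euler--Lagrange equations say that \<open>dH\<^sub>k\<close> and \<open>\<omega>\<^sub>R(\<partial>\<^sub>k \<xi>, \<cdot>)\<close> agree on the tangent
  space of the orbit; since \<open>\<omega>\<^sub>R(ad*(X) L, ad*(Y) L) = (L, [X, Y]\<^sub>R)\<close>, this gives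
  \<open>T\<^sub>k\<^sub>l = 0\<close> and, more generally, \<open>(L, [m\<^sub>k, Y]\<^sub>R) = (L, [\<nabla>H\<^sub>k, Y]\<^sub>R)\<close> for all \<open>Y\<close>.
  Replacing \<open>m\<^sub>k\<close> and \<open>m\<^sub>l\<close> by the gradients in \<open>(L, [m\<^sub>l, m\<^sub>k]\<^sub>R)\<close> yields
  \<open>-{H\<^sub>k, H\<^sub>l}\<^sub>R(L)\<close>.

  That \<open>Ad\<^sub>\<phi>\<close> preserves \<open>\<rho>(g)\<close> for \<open>\<phi> \<in> G\<^sub>R\<close>, which is needed to read \<open>L\<close> and \<open>m\<close> in
  coordinates of \<open>g\<close>, is proved by a Gronwall argument along the path defining \<open>\<phi>\<close>.
\<close>


lemma matrix_add_rdistrib: "((A::'a::semiring_1^'n^'m) + B) ** C = A ** C + B ** C"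
  by (simp add: matrix_matrix_mult_def vec_eq_iff sum.distrib distrib_right)

lemma matrix_diff_ldistrib: "(C::'a::ring_1^'n^'m) ** (A - B) = C ** A - C ** B"
  by (simp add: matrix_matrix_mult_def vec_eq_iff sum_subtractf right_diff_distrib)

lemma matrix_diff_rdistrib: "((A::'a::ring_1^'n^'m) - B) ** C = A ** C - B ** C"
  by (simp add: matrix_matrix_mult_def vec_eq_iff sum_subtractf left_diff_distrib)

lemma matrix_neg_left: "(- (A::'a::ring_1^'n^'m)) ** C = - (A ** C)"
  by (simp add: matrix_matrix_mult_def vec_eq_iff sum_negf)

lemma matrix_neg_right: "(C::'a::ring_1^'n^'m) ** (- A) = - (C ** A)"
  by (simp add: matrix_matrix_mult_def vec_eq_iff sum_negf)

lemma bounded_bilinear_matrix_mult: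
  "bounded_bilinear ((**) :: 'a::{real_normed_algebra_1,euclidean_space}^'n^'m \<Rightarrow> 'a^'p^'n \<Rightarrow> _)"
proof -
  have "bilinear ((**) :: 'a^'n^'m \<Rightarrow> 'a^'p^'n \<Rightarrow> _)"
    unfolding bilinear_def
    by (auto intro!: linearI simp: matrix_add_ldistrib matrix_add_rdistrib
        scalar_matrix_assoc matrix_scalar_ac)
  then show ?thesis
    using bilinear_conv_bounded_bilinear by blast
qed

lemma matrix_inv_right: "invertible (A::'a::semiring_1^'n^'m) \<Longrightarrow> A ** matrix_inv A = mat 1"
  unfolding invertible_def matrix_inv_def by (rule someI_ex[THEN conjunct1])

lemma matrix_inv_left: "invertible (A::'a::semiring_1^'n^'m) \<Longrightarrow> matrix_inv A ** A = mat 1"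
  unfolding invertible_def matrix_inv_def by (rule someI_ex[THEN conjunct2])

lemma matrix_inv_unique: "(A::'a::semiring_1^'n^'n) ** B = mat 1 \<Longrightarrow> B ** A = mat 1 \<Longrightarrow> matrix_inv A = B"
  by (metis invertible_def matrix_inv_left matrix_mul_assoc matrix_mul_lid matrix_mul_rid)

lemma matrix_inv_matrix_inv: "invertible (A::'a::semiring_1^'n^'n) \<Longrightarrow> matrix_inv (matrix_inv A) = A"
  by (simp add: matrix_inv_unique matrix_inv_left matrix_inv_right)

lemma matrix_inv_mat_1: "matrix_inv (mat 1 :: 'a::semiring_1^'n^'n) = mat 1"
  by (simp add: matrix_inv_unique)

lemma matrix_inv_perturb:
  assumes "invertible (A::'a::ring_1^'n^'n)" "invertible B"
  shows "matrix_inv A - matrix_inv B = matrix_inv A ** (B - A) ** matrix_inv B"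
proof -
  have "matrix_inv A ** (B - A) ** matrix_inv B
      = matrix_inv A ** (B ** matrix_inv B) - (matrix_inv A ** A) ** matrix_inv B"
    by (simp add: matrix_diff_ldistrib matrix_diff_rdistrib matrix_mul_assoc)
  also have "\<dots> = matrix_inv A - matrix_inv B"
    using assms by (simp add: matrix_inv_right matrix_inv_left)
  finally show ?thesis ..
qed

section \<open>The derivative of the matrix inverse\<close>

lemma tendsto_matrix_inv:
  fixes f :: "'b \<Rightarrow> 'a::{real_normed_algebra_1,euclidean_space}^'n^'n"
  assumes lim: "(f \<longlongrightarrow> A) F" and A: "invertible A"
    and inv: "eventually (\<lambda>y. invertible (f y)) F"
  shows "((\<lambda>y. matrix_inv (f y)) \<longlongrightarrow> matrix_inv A) F"
proof -
  note mult = bounded_bilinear_matrix_mult[where 'a='a and 'n='n and 'm='n and 'p='n]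
  obtain K where K: "K > 0" "\<And>(X::'a^'n^'n) (Y::'a^'n^'n). norm (X ** Y) \<le> norm X * norm Y * K"
    using bounded_bilinear.pos_bounded[OF mult] by blast
  define a where "a = norm (matrix_inv A)"
  have bound: "norm (matrix_inv B) \<le> 2 * a"
    if B: "invertible B" and small: "norm (B - A) * (a * K * K) < 1/2" for B
  proof -
    have "norm (matrix_inv A ** (B - A) ** matrix_inv B) \<le> norm (matrix_inv A ** (B - A)) * norm (matrix_inv B) * K"
      by (rule K(2))
    also have "\<dots> \<le> (a * norm (B - A) * K) * norm (matrix_inv B) * K"
      using K by (simp add: a_def mult_right_mono)
    finally have "norm (matrix_inv A ** (B - A) ** matrix_inv B) \<le> (norm (B - A) * (a * K * K)) * norm (matrix_inv B)"
      by (simp add: algebra_simps)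
    also have "\<dots> \<le> 1/2 * norm (matrix_inv B)"
      using small by (intro mult_right_mono) auto
    finally have "norm (matrix_inv A ** (B - A) ** matrix_inv B) \<le> 1/2 * norm (matrix_inv B)" .
    moreover have "norm (matrix_inv B) \<le> a + norm (matrix_inv A ** (B - A) ** matrix_inv B)"
      using norm_triangle_ineq4[of "matrix_inv A" "matrix_inv A ** (B - A) ** matrix_inv B"]
      unfolding matrix_inv_perturb[OF A B, symmetric] by (simp add: a_def)
    ultimately show ?thesis by linarith
  qed
  have "((\<lambda>y. norm (f y - A) * (a * K * K)) \<longlongrightarrow> 0 * (a * K * K)) F"
    using lim by (intro tendsto_mult_right tendsto_norm_zero) (rule LIM_zero)
  then have "eventually (\<lambda>y. norm (f y - A) * (a * K * K) < 1/2) F"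
    by (rule order_tendstoD(2)) simp
  with inv have "eventually (\<lambda>y. norm (matrix_inv (f y)) \<le> 2 * a) F"
    by eventually_elim (rule bound)
  then have bounded: "Bfun (\<lambda>y. matrix_inv (f y)) F"
    by (rule BfunI)
  have "Zfun (\<lambda>y. - (matrix_inv A ** (f y - A))) F"
    using lim by (intro Zfun_minus bounded_linear.Zfun[OF bounded_bilinear.bounded_linear_right[OF mult]])
      (simp add: tendsto_Zfun_iff)
  then have "Zfun (\<lambda>y. - (matrix_inv A ** (f y - A)) ** matrix_inv (f y)) F"
    using bounded by (rule bounded_bilinear.Zfun_prod_Bfun[OF mult])
  moreover have "eventually (\<lambda>y. matrix_inv (f y) - matrix_inv A = - (matrix_inv A ** (f y - A)) ** matrix_inv (f y)) F"
    using inv by eventually_elim (simp add: matrix_inv_perturb[OF A, symmetric] matrix_neg_left)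
  ultimately show ?thesis
    unfolding tendsto_Zfun_iff by (rule Zfun_ssubst[rotated])
qed

lemma (in bounded_bilinear) has_derivative_prod_increment:
  assumes u: "(u has_derivative u') (at x within S)" and v: "(v \<longlongrightarrow> v x) (at x within S)"
  shows "((\<lambda>y. prod (u y - u x) (v y)) has_derivative (\<lambda>h. prod (u' h) (v x))) (at x within S)"
proof -
  interpret u': bounded_linear u'
    using u by (rule has_derivative_bounded_linear)
  obtain B where B: "B > 0" "\<And>h. norm (u' h) \<le> norm h * B"
    using u'.pos_bounded by blast
  define r where "r y = ((u y - u x) - u' (y - x)) /\<^sub>R norm (y - x)" for y
  have "(r \<longlongrightarrow> 0) (at x within S)"
    using u unfolding has_derivative_at_within r_def by blast
  then have "((\<lambda>y. prod (r y) (v y)) \<longlongrightarrow> prod 0 (v x)) (at x within S)"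
    using v by (rule tendsto)
  then have "Zfun (\<lambda>y. prod (r y) (v y)) (at x within S)"
    by (simp add: tendsto_Zfun_iff zero_left)
  moreover have "Zfun (\<lambda>y. prod (u' ((y - x) /\<^sub>R norm (y - x))) (v y - v x)) (at x within S)"
  proof (rule Bfun_prod_Zfun)
    have "norm (u' ((y - x) /\<^sub>R norm (y - x))) \<le> B" for y
      using B(1) B(2)[of "(y - x) /\<^sub>R norm (y - x)"] by (cases "y = x") auto
    then show "Bfun (\<lambda>y. u' ((y - x) /\<^sub>R norm (y - x))) (at x within S)"
      by (intro BfunI always_eventually) auto
    show "Zfun (\<lambda>y. v y - v x) (at x within S)"
      using v by (simp add: tendsto_Zfun_iff)
  qed
  ultimately have "Zfun (\<lambda>y. prod (r y) (v y) + prod (u' ((y - x) /\<^sub>R norm (y - x))) (v y - v x)) (at x within S)"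
    by (rule Zfun_add)
  moreover have "prod (r y) (v y) + prod (u' ((y - x) /\<^sub>R norm (y - x))) (v y - v x)
      = ((prod (u y - u x) (v y) - prod (u x - u x) (v x)) - prod (u' (y - x)) (v x)) /\<^sub>R norm (y - x)" for y
    unfolding u'.scaleR r_def by (simp add: scaleR_left diff_left diff_right zero_left scaleR_diff_right)
  ultimately show ?thesis
    unfolding has_derivative_at_within tendsto_Zfun_iff
    by (simp add: bounded_linear_compose[OF bounded_linear_left u'.bounded_linear])
qed

lemma has_derivative_matrix_inv:
  fixes f :: "'b::real_normed_vector \<Rightarrow> 'a::{real_normed_algebra_1,euclidean_space}^'n^'n"
  assumes f: "(f has_derivative f') (at x within S)" and x: "x \<in> S"
    and inv: "\<And>y. y \<in> S \<Longrightarrow> invertible (f y)"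
  shows "((\<lambda>y. matrix_inv (f y)) has_derivative
           (\<lambda>h. - (matrix_inv (f x) ** f' h ** matrix_inv (f x)))) (at x within S)"
proof -
  define Fi where "Fi = matrix_inv (f x)"
  interpret prod: bounded_bilinear "\<lambda>X Y :: 'a^'n^'n. - (Fi ** X) ** Y"
    using bounded_bilinear.comp1[OF bounded_bilinear_matrix_mult bounded_linear_minus[OF
        bounded_bilinear.bounded_linear_right[OF bounded_bilinear_matrix_mult]]] .
  have "((\<lambda>y. matrix_inv (f y)) \<longlongrightarrow> Fi) (at x within S)"
    unfolding Fi_def using has_derivative_continuous[OF f] x inv
    by (intro tendsto_matrix_inv) (auto simp: continuous_within eventually_at_filter)
  then have "((\<lambda>y. - (Fi ** (f y - f x)) ** matrix_inv (f y)) has_derivative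
      (\<lambda>h. - (Fi ** f' h) ** Fi)) (at x within S)"
    using prod.has_derivative_prod_increment[OF f, of "\<lambda>y. matrix_inv (f y)"] by (simp add: Fi_def)
  then have "((\<lambda>y. Fi + - (Fi ** (f y - f x)) ** matrix_inv (f y)) has_derivative
      (\<lambda>h. 0 + - (Fi ** f' h) ** Fi)) (at x within S)"
    by (rule has_derivative_add[OF has_derivative_const])
  then have "((\<lambda>y. Fi + - (Fi ** (f y - f x)) ** matrix_inv (f y)) has_derivative
      (\<lambda>h. - (Fi ** f' h ** Fi))) (at x within S)"
    by (rule has_derivative_eq_rhs) (simp add: fun_eq_iff matrix_neg_left)
  then show ?thesis
    unfolding Fi_def using x
    by (rule has_derivative_transform[rotated 2])
      (simp add: inv matrix_inv_perturb[OF inv[OF x], symmetric] matrix_neg_left)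
qed


section \<open>Symmetry of second derivatives\<close>

lemma second_difference_bound:
  fixes f :: "'a::real_normed_vector \<Rightarrow> 'b::real_normed_vector"
  assumes df: "\<And>y. (f has_derivative f' y) (at y)"
    and Du: "bounded_linear Du" and e: "0 \<le> e"
    and near: "\<And>y. norm (y - x) < d \<Longrightarrow> norm (f' y u - f' x u - Du (y - x)) \<le> e * norm (y - x)"
    and h: "\<bar>h\<bar> * (norm u + norm v) < d"
  shows "norm ((f (x + h *\<^sub>R u + h *\<^sub>R v) - f (x + h *\<^sub>R u) - f (x + h *\<^sub>R v) + f x) - (h * h) *\<^sub>R Du v)
           \<le> e * (2 * norm u + norm v) * (h * h)"
proof -
  interpret Du: bounded_linear Du by (rule Du)
  define k where "k s = f (x + s *\<^sub>R u + h *\<^sub>R v) - f (x + s *\<^sub>R u) - s *\<^sub>R (h *\<^sub>R Du v)" for s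
  define w where "w s = f' (x + s *\<^sub>R u + h *\<^sub>R v) u - f' (x + s *\<^sub>R u) u - h *\<^sub>R Du v" for s
  have dk: "(k has_derivative (\<lambda>r. r *\<^sub>R w s)) (at s within closed_segment 0 h)" for s
  proof -
    have "(k has_derivative (\<lambda>r. f' (x + s *\<^sub>R u + h *\<^sub>R v) (r *\<^sub>R u) - f' (x + s *\<^sub>R u) (r *\<^sub>R u)
        - r *\<^sub>R (h *\<^sub>R Du v))) (at s within closed_segment 0 h)"
      unfolding k_def
      by (intro has_derivative_diff has_derivative_compose[OF _ df, unfolded o_def] derivative_eq_intros)
        auto
    moreover have "linear (f' y)" for y
      using df has_derivative_linear by blast
    ultimately show ?thesis
      by (simp add: w_def linear_scale scaleR_diff_right)
  qed
  have "norm (w s) \<le> e * \<bar>h\<bar> * (2 * norm u + norm v)" if s: "s \<in> closed_segment 0 h" for s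
  proof -
    have "\<bar>s\<bar> \<le> \<bar>h\<bar>"
      using s by (auto simp: closed_segment_eq_real_ivl split: if_splits)
    then have n2: "norm (s *\<^sub>R u) \<le> \<bar>h\<bar> * norm u"
      by (simp add: mult_right_mono)
    then have n1: "norm (s *\<^sub>R u + h *\<^sub>R v) \<le> \<bar>h\<bar> * (norm u + norm v)"
      using norm_triangle_ineq[of "s *\<^sub>R u" "h *\<^sub>R v"] by (simp add: algebra_simps)
    have "w s = (f' (x + (s *\<^sub>R u + h *\<^sub>R v)) u - f' x u - Du (s *\<^sub>R u + h *\<^sub>R v))
        - (f' (x + s *\<^sub>R u) u - f' x u - Du (s *\<^sub>R u))"
      by (simp add: w_def Du.add Du.scaleR algebra_simps)
    then have "norm (w s) \<le> e * norm (s *\<^sub>R u + h *\<^sub>R v) + e * norm (s *\<^sub>R u)"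
      using near[of "x + (s *\<^sub>R u + h *\<^sub>R v)"] near[of "x + s *\<^sub>R u"] n1 n2 h
        norm_triangle_ineq4[of "f' (x + (s *\<^sub>R u + h *\<^sub>R v)) u - f' x u - Du (s *\<^sub>R u + h *\<^sub>R v)"
          "f' (x + s *\<^sub>R u) u - f' x u - Du (s *\<^sub>R u)"]
      by (smt (verit) add_diff_cancel_left' mult_left_mono norm_ge_zero)
    also have "\<dots> \<le> e * (\<bar>h\<bar> * (norm u + norm v)) + e * (\<bar>h\<bar> * norm u)"
      using n1 n2 e by (intro add_mono mult_left_mono) auto
    finally show ?thesis
      by (simp add: algebra_simps)
  qed
  moreover have "onorm (\<lambda>r. r *\<^sub>R w s) = norm (w s)" for s
    using onorm_scaleR_left[OF bounded_linear_ident, of "w s"] by (simp add: onorm_id)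
  ultimately have "norm (k h - k 0) \<le> (e * \<bar>h\<bar> * (2 * norm u + norm v)) * norm (h - 0)"
    by (intro differentiable_bound[OF convex_closed_segment dk]) auto
  moreover have "k h - k 0 = (f (x + h *\<^sub>R u + h *\<^sub>R v) - f (x + h *\<^sub>R u) - f (x + h *\<^sub>R v) + f x)
      - (h * h) *\<^sub>R Du v"
    by (simp add: k_def algebra_simps)
  ultimately show ?thesis
    by (simp add: abs_mult_self_eq algebra_simps)
qed

lemma second_derivative_symmetric_approx:
  fixes f :: "'a::real_normed_vector \<Rightarrow> 'b::real_normed_vector"
  assumes df: "\<And>y. (f has_derivative f' y) (at y)"
    and du: "((\<lambda>y. f' y u) has_derivative Du) (at x)"
    and dv: "((\<lambda>y. f' y v) has_derivative Dv) (at x)"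
    and e: "e > 0"
  shows "norm (Du v - Dv u) \<le> e * (3 * (norm u + norm v) + 1)"
proof -
  obtain d1 where d1: "d1 > 0"
    "\<And>y. norm (y - x) < d1 \<Longrightarrow> norm (f' y u - f' x u - Du (y - x)) \<le> e * norm (y - x)"
    using du e unfolding has_derivative_at_alt by blast
  obtain d2 where d2: "d2 > 0"
    "\<And>y. norm (y - x) < d2 \<Longrightarrow> norm (f' y v - f' x v - Dv (y - x)) \<le> e * norm (y - x)"
    using dv e unfolding has_derivative_at_alt by blast
  define N where "N = norm u + norm v"
  define h where "h = min d1 d2 / (2 * N + 2)"
  have N: "N \<ge> 0" and m: "min d1 d2 > 0"
    using d1(1) d2(1) by (simp_all add: N_def)
  then have "h > 0"
    by (simp add: h_def)
  moreover have "h * N = min d1 d2 * (N / (2 * N + 2))"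
    by (simp add: h_def)
  moreover have "\<dots> < min d1 d2 * 1"
    using N m by (intro mult_strict_left_mono) auto
  ultimately have h: "h > 0" "\<bar>h\<bar> * (norm u + norm v) < min d1 d2"
    by (simp_all add: N_def)
  define \<Delta> where "\<Delta> = f (x + h *\<^sub>R u + h *\<^sub>R v) - f (x + h *\<^sub>R u) - f (x + h *\<^sub>R v) + f x"
  have b1: "norm (\<Delta> - (h * h) *\<^sub>R Du v) \<le> e * (2 * norm u + norm v) * (h * h)"
    unfolding \<Delta>_def using du e h(2)
    by (intro second_difference_bound[OF df _ _ d1(2)]) (auto dest: has_derivative_bounded_linear)
  have "norm ((f (x + h *\<^sub>R v + h *\<^sub>R u) - f (x + h *\<^sub>R v) - f (x + h *\<^sub>R u) + f x)
      - (h * h) *\<^sub>R Dv u) \<le> e * (2 * norm v + norm u) * (h * h)"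
    using dv e h(2)
    by (intro second_difference_bound[OF df _ _ d2(2)])
      (auto dest: has_derivative_bounded_linear simp: add.commute)
  then have b2: "norm (\<Delta> - (h * h) *\<^sub>R Dv u) \<le> e * (2 * norm v + norm u) * (h * h)"
    by (simp add: \<Delta>_def algebra_simps)
  have "(h * h) * norm (Du v - Dv u) = norm ((\<Delta> - (h * h) *\<^sub>R Dv u) - (\<Delta> - (h * h) *\<^sub>R Du v))"
    using h(1) by (simp add: scaleR_diff_right[symmetric])
  also have "\<dots> \<le> e * (3 * (norm u + norm v)) * (h * h)"
    using b1 b2 norm_triangle_ineq4[of "\<Delta> - (h * h) *\<^sub>R Dv u" "\<Delta> - (h * h) *\<^sub>R Du v"]
    by (simp add: algebra_simps)
  also have "\<dots> \<le> (h * h) * (e * (3 * (norm u + norm v) + 1))"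
    using e h(1) by (simp add: algebra_simps)
  finally show ?thesis
    using h(1) by simp
qed

lemma second_derivative_symmetric:
  fixes f :: "'a::real_normed_vector \<Rightarrow> 'b::real_normed_vector"
  assumes df: "\<And>y. (f has_derivative f' y) (at y)"
    and du: "((\<lambda>y. f' y u) has_derivative Du) (at x)"
    and dv: "((\<lambda>y. f' y v) has_derivative Dv) (at x)"
  shows "Du v = Dv u"
proof -
  define C where "C = 3 * (norm u + norm v) + 1"
  have C: "C > 0"
    by (simp add: C_def add_nonneg_pos)
  have "norm (Du v - Dv u) \<le> 0 + e" if "e > 0" for e
    using second_derivative_symmetric_approx[OF df du dv, of "e / C"] that C by (simp add: C_def)
  then have "norm (Du v - Dv u) \<le> 0"
    by (rule field_le_epsilon)
  then show ?thesis
    by simp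
qed


section \<open>Conjugation along a path whose logarithmic derivative lies in a Lie subalgebra\<close>

lemma gronwall_backward_zero:
  fixes q :: "real \<Rightarrow> 'e::real_inner"
  assumes cont: "continuous_on {0..1} q"
    and der: "\<And>s. s \<in> {0<..<1} \<Longrightarrow> (q has_derivative (\<lambda>h. h *\<^sub>R q' s)) (at s)"
    and bnd: "\<And>s. s \<in> {0<..<1} \<Longrightarrow> norm (q' s) \<le> C * norm (q s)"
    and C: "C \<ge> 0"
    and q1: "q 1 = 0"
  shows "q 0 = 0"
proof -
  define n where "n s = exp (2 * C * s) * (q s \<bullet> q s)" for s
  have "n 0 \<le> n 1"
  proof (rule DERIV_nonneg_imp_increasing_open[of 0 1])
    fix s :: real assume s: "0 < s" "s < 1"
    have dq: "((\<lambda>s. q s \<bullet> q s) has_derivative (\<lambda>h. q s \<bullet> (h *\<^sub>R q' s) + (h *\<^sub>R q' s) \<bullet> q s)) (at s)"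
      using has_derivative_inner[OF der der] s by simp
    moreover have "(\<lambda>h. q s \<bullet> (h *\<^sub>R q' s) + (h *\<^sub>R q' s) \<bullet> q s) = (*) (2 * (q s \<bullet> q' s))"
      by (simp add: fun_eq_iff inner_commute algebra_simps)
    ultimately have dq': "((\<lambda>s. q s \<bullet> q s) has_real_derivative (2 * (q s \<bullet> q' s))) (at s)"
      by (simp add: has_field_derivative_def)
    have dn: "(n has_real_derivative
        (exp (2 * C * s) * (2 * C) * (q s \<bullet> q s) + exp (2 * C * s) * (2 * (q s \<bullet> q' s)))) (at s)"
      unfolding n_def
      by (auto intro!: derivative_eq_intros dq')
    have "\<bar>q s \<bullet> q' s\<bar> \<le> norm (q s) * norm (q' s)" by (rule Cauchy_Schwarz_ineq2)
    also have "\<dots> \<le> norm (q s) * (C * norm (q s))" using bnd[of s] s by (simp add: mult_left_mono)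
    also have "\<dots> = C * (q s \<bullet> q s)" by (simp add: power2_norm_eq_inner[symmetric] power2_eq_square)
    finally have "0 \<le> C * (q s \<bullet> q s) + q s \<bullet> q' s" by linarith
    moreover have "exp (2 * C * s) * (2 * C) * (q s \<bullet> q s) + exp (2 * C * s) * (2 * (q s \<bullet> q' s))
        = 2 * exp (2 * C * s) * (C * (q s \<bullet> q s) + q s \<bullet> q' s)"
      by (simp add: algebra_simps)
    ultimately have "0 \<le> exp (2 * C * s) * (2 * C) * (q s \<bullet> q s) + exp (2 * C * s) * (2 * (q s \<bullet> q' s))"
      by simp
    with dn show "\<exists>y. (n has_real_derivative y) (at s) \<and> 0 \<le> y"
      by blast
  next
    show "continuous_on {0..1} n" unfolding n_def
      by (intro continuous_intros cont)
  qed simp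
  then have "q 0 \<bullet> q 0 \<le> 0"
    by (simp add: n_def q1)
  then have "q 0 \<bullet> q 0 = 0"
    using inner_ge_zero[of "q 0"] by linarith
  then show ?thesis
    by simp
qed

lemma has_derivative_conjugation:
  fixes \<gamma> :: "real \<Rightarrow> 'a::{real_normed_algebra_1,euclidean_space}^'n^'n" and B :: "'a^'n^'n"
  assumes \<gamma>: "(\<gamma> has_vector_derivative \<gamma>') (at s within S)" and s: "s \<in> S"
    and inv: "\<And>y. y \<in> S \<Longrightarrow> invertible (\<gamma> y)"
  defines "M \<equiv> \<gamma>' ** matrix_inv (\<gamma> s)" and "Q \<equiv> \<lambda>s. \<gamma> s ** B ** matrix_inv (\<gamma> s)"
  shows "(Q has_derivative (\<lambda>h. h *\<^sub>R (M ** Q s - Q s ** M))) (at s within S)"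
proof -
  note mult = bounded_bilinear_matrix_mult
  have d1: "((\<lambda>s. \<gamma> s ** B) has_derivative (\<lambda>h. \<gamma> s ** 0 + (h *\<^sub>R \<gamma>') ** B)) (at s within S)"
    using \<gamma> unfolding has_vector_derivative_def
    by (rule bounded_bilinear.FDERIV[OF mult _ has_derivative_const])
  have "(Q has_derivative (\<lambda>h. (\<gamma> s ** B) ** (- (matrix_inv (\<gamma> s) ** (h *\<^sub>R \<gamma>') ** matrix_inv (\<gamma> s)))
      + (\<gamma> s ** 0 + (h *\<^sub>R \<gamma>') ** B) ** matrix_inv (\<gamma> s))) (at s within S)"
    unfolding Q_def using \<gamma> s inv unfolding has_vector_derivative_def
    by (intro bounded_bilinear.FDERIV[OF mult d1] has_derivative_matrix_inv)
  moreover have "M ** Q s = \<gamma>' ** (matrix_inv (\<gamma> s) ** \<gamma> s) ** B ** matrix_inv (\<gamma> s)"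
    by (simp add: M_def Q_def matrix_mul_assoc)
  then have "M ** Q s = \<gamma>' ** B ** matrix_inv (\<gamma> s)"
    using matrix_inv_left[OF inv[OF s]] by simp
  ultimately show ?thesis
    by (simp add: Q_def M_def matrix_neg_left matrix_neg_right matrix_diff_ldistrib
        scalar_matrix_assoc[symmetric] matrix_scalar_ac matrix_mul_assoc scaleR_diff_right)
qed

lemma projected_commutator_bound:
  fixes P :: "'a::{real_normed_algebra_1,euclidean_space}^'n^'n \<Rightarrow> 'a^'n^'n"
  assumes P: "bounded_linear P" and P_kernel: "\<And>X. P X = 0 \<longleftrightarrow> X \<in> V"
    and P_proj: "\<And>X. X - P X \<in> V"
    and V_commutator: "\<And>X Y. X \<in> V \<Longrightarrow> Y \<in> V \<Longrightarrow> X ** Y - Y ** X \<in> V"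
  obtains C where "C \<ge> 0" "\<And>M Q. M \<in> V \<Longrightarrow> norm (P (M ** Q - Q ** M)) \<le> C * norm M * norm (P Q)"
proof -
  interpret P: bounded_linear P by (rule P)
  obtain K where K: "K > 0" "\<And>(X::'a^'n^'n) (Y::'a^'n^'n). norm (X ** Y) \<le> norm X * norm Y * K"
    using bounded_bilinear.pos_bounded[OF bounded_bilinear_matrix_mult] by blast
  obtain C where C: "C > 0" "\<And>X. norm (P X) \<le> norm X * C"
    using P.pos_bounded by blast
  have "norm (P (M ** Q - Q ** M)) \<le> (2 * K * C) * norm M * norm (P Q)" if M: "M \<in> V" for M Q
  proof -
    define W where "W = Q - P Q"
    have "M ** W - W ** M \<in> V"
      using V_commutator M P_proj by (simp add: W_def)
    moreover have "M ** Q - Q ** M = (M ** W - W ** M) + (M ** P Q - P Q ** M)"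
      by (simp add: W_def matrix_diff_ldistrib matrix_diff_rdistrib)
    ultimately have "P (M ** Q - Q ** M) = P (M ** P Q - P Q ** M)"
      using P_kernel by (simp add: P.add)
    then have "norm (P (M ** Q - Q ** M)) \<le> norm (M ** P Q - P Q ** M) * C"
      by (simp add: C(2))
    also have "\<dots> \<le> (2 * K * norm M * norm (P Q)) * C"
      using norm_triangle_ineq4[of "M ** P Q" "P Q ** M"] K(2)[of M "P Q"] K(2)[of "P Q" M] C(1)
      by (intro mult_right_mono) (auto simp: algebra_simps)
    finally show ?thesis
      by (simp add: algebra_simps)
  qed
  then show thesis
    using that[of "2 * K * C"] K(1) C(1) by simp
qed

text \<open>With \<open>M = \<gamma>' \<gamma>\<^sup>-\<^sup>1\<close>, the conjugates \<open>Q s = \<gamma> s B \<gamma>(s)\<^sup>-\<^sup>1\<close> of \<open>B = \<gamma>(1)\<^sup>-\<^sup>1 Y \<gamma>(1)\<close>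
  solve \<open>Q' = [M, Q]\<close>; their component \<open>P Q\<close> transversal to \<open>V\<close> then obeys a linear
  differential inequality and vanishes at \<open>s = 1\<close>, hence also at \<open>s = 0\<close>, where \<open>Q 0 = B\<close>.\<close>

lemma conjugation_invariant_along_path:
  fixes \<gamma> \<gamma>' :: "real \<Rightarrow> 'a::{real_normed_algebra_1,euclidean_space}^'n^'n"
    and P :: "'a^'n^'n \<Rightarrow> 'a^'n^'n"
  assumes P: "linear P" and P_kernel: "\<And>X. P X = 0 \<longleftrightarrow> X \<in> V" and P_proj: "\<And>X. X - P X \<in> V"
    and V_commutator: "\<And>X Y. X \<in> V \<Longrightarrow> Y \<in> V \<Longrightarrow> X ** Y - Y ** X \<in> V"
    and \<gamma>0: "\<gamma> 0 = mat 1" and \<gamma>'_cont: "continuous_on {0..1} \<gamma>'"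
    and \<gamma>_deriv: "\<And>s. s \<in> {0..1} \<Longrightarrow> (\<gamma> has_vector_derivative \<gamma>' s) (at s within {0..1})"
    and \<gamma>_inv: "\<And>s. s \<in> {0..1} \<Longrightarrow> invertible (\<gamma> s)"
    and \<gamma>_log: "\<And>s. s \<in> {0..1} \<Longrightarrow> \<gamma>' s ** matrix_inv (\<gamma> s) \<in> V"
    and Y: "Y \<in> V"
  shows "matrix_inv (\<gamma> 1) ** Y ** \<gamma> 1 \<in> V"
proof -
  define B where "B = matrix_inv (\<gamma> 1) ** Y ** \<gamma> 1"
  define Q where "Q s = \<gamma> s ** B ** matrix_inv (\<gamma> s)" for s
  define M where "M s = \<gamma>' s ** matrix_inv (\<gamma> s)" for s
  interpret P: bounded_linear P
    using P linear_conv_bounded_linear by blast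
  have dQ: "(Q has_derivative (\<lambda>h. h *\<^sub>R (M s ** Q s - Q s ** M s))) (at s within {0..1})"
    if "s \<in> {0..1}" for s
    unfolding Q_def M_def using that \<gamma>_inv by (intro has_derivative_conjugation \<gamma>_deriv)
  have dPQ: "((\<lambda>s. P (Q s)) has_derivative (\<lambda>h. h *\<^sub>R P (M s ** Q s - Q s ** M s))) (at s)"
    if "s \<in> {0<..<1}" for s
    using P.has_derivative[OF dQ[of s]] that at_within_interior[of s "{0..1::real}"]
    by (auto simp: P.scaleR)
  have "continuous_on {0..1} Q"
    using dQ has_derivative_continuous continuous_on_eq_continuous_within by blast
  then have PQ_cont: "continuous_on {0..1} (\<lambda>s. P (Q s))"
    by (rule P.continuous_on)
  have "continuous_on {0..1} (\<lambda>s. matrix_inv (\<gamma> s))"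
    unfolding continuous_on_eq_continuous_within
    using has_derivative_continuous[OF has_derivative_matrix_inv[OF
          \<gamma>_deriv[unfolded has_vector_derivative_def] _ \<gamma>_inv]] by blast
  then have "continuous_on {0..1} M"
    unfolding M_def by (rule bounded_bilinear.continuous_on[OF bounded_bilinear_matrix_mult \<gamma>'_cont])
  then have "bounded (M ` {0..1})"
    by (intro compact_imp_bounded compact_continuous_image compact_Icc)
  then obtain Mb where Mb: "\<And>s. s \<in> {0..1} \<Longrightarrow> norm (M s) \<le> Mb"
    unfolding bounded_iff by blast
  obtain C where C: "C \<ge> 0" "\<And>M Q. M \<in> V \<Longrightarrow> norm (P (M ** Q - Q ** M)) \<le> C * norm M * norm (P Q)"
    using projected_commutator_bound[OF P.bounded_linear P_kernel P_proj V_commutator] by blast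
  have "norm (P (M s ** Q s - Q s ** M s)) \<le> (C * Mb) * norm (P (Q s))" if "s \<in> {0<..<1}" for s
  proof -
    have s: "s \<in> {0..1}"
      using that by auto
    have "norm (P (M s ** Q s - Q s ** M s)) \<le> C * norm (M s) * norm (P (Q s))"
      using C(2) \<gamma>_log[OF s] by (simp add: M_def)
    also have "\<dots> \<le> C * Mb * norm (P (Q s))"
      using C(1) Mb[OF s] by (intro mult_right_mono mult_left_mono) auto
    finally show ?thesis .
  qed
  moreover have "Q 1 = (\<gamma> 1 ** matrix_inv (\<gamma> 1)) ** Y ** (\<gamma> 1 ** matrix_inv (\<gamma> 1))"
    by (simp add: Q_def B_def matrix_mul_assoc)
  then have "P (Q 1) = 0"
    using matrix_inv_right[OF \<gamma>_inv[of 1]] P_kernel Y by simp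
  moreover have "0 \<le> C * Mb"
    using C(1) order_trans[OF norm_ge_zero Mb[of 0]] by simp
  ultimately have "P (Q 0) = 0"
    by (intro gronwall_backward_zero[where q = "\<lambda>s. P (Q s)", OF PQ_cont dPQ])
  then show ?thesis
    using P_kernel by (simp add: Q_def B_def \<gamma>0 matrix_inv_mat_1)
qed


lemma msc_add_left: "msc (c + d) X = msc c X + msc d X"
  by (simp add: msc_def vec_eq_iff distrib_right)

lemma msc_diff_right: "msc c (X - Y) = msc c X - msc c Y"
  by (simp add: msc_def vec_eq_iff right_diff_distrib)

lemma msc_msc: "msc c (msc d X) = msc (c * d) X"
  by (simp add: msc_def vec_eq_iff mult.assoc)

lemma msc_sum: "msc c (\<Sum>i\<in>A. f i) = (\<Sum>i\<in>A. msc c (f i))"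
  by (simp add: msc_def vec_eq_iff sum_component sum_distrib_left)

lemma msc_matrix_mult_left: "msc c A ** B = msc c (A ** B)"
  by (simp add: msc_def vec_eq_iff matrix_matrix_mult_def sum_distrib_left mult.assoc)

lemma msc_matrix_mult_right: "A ** msc c B = msc c (A ** B)"
  by (simp add: msc_def vec_eq_iff matrix_matrix_mult_def sum_distrib_left mult.left_commute)

lemma msc_of_real: "msc (of_real r) A = r *\<^sub>R A"
  by (simp add: msc_def vec_eq_iff of_real_def)

lemma lincomb_add: "lincomb e (c + d) = lincomb e c + lincomb e d"
  by (simp add: lincomb_def msc_add_left sum.distrib)

lemma lincomb_scale: "lincomb e (z *s c) = msc z (lincomb e c)"
  by (simp add: lincomb_def msc_sum msc_msc)

lemma lincomb_diff: "lincomb e (c - d) = lincomb e c - lincomb e d"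
  using lincomb_add[of e d "c - d"] by simp

lemma gset_add: "X \<in> gset e \<Longrightarrow> Y \<in> gset e \<Longrightarrow> X + Y \<in> gset e"
  unfolding gset_def by (auto simp flip: lincomb_add)

lemma gset_msc: "X \<in> gset e \<Longrightarrow> msc c X \<in> gset e"
  unfolding gset_def by (auto simp flip: lincomb_scale)

lemma lincomb_axis: "lincomb e (axis a 1) = e a"
proof -
  have "lincomb e (axis a 1) = (\<Sum>b\<in>UNIV. if b = a then e b else 0)"
    unfolding lincomb_def by (intro sum.cong) (auto simp: axis_def msc_def vec_eq_iff)
  then show ?thesis by simp
qed

definition dotc :: "'a::comm_ring_1^'d::finite \<Rightarrow> 'a^'d \<Rightarrow> 'a" where
  "dotc x y = (\<Sum>a\<in>UNIV. x $ a * y $ a)"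

lemma dotc_add_right: "dotc x (y + z) = dotc x y + dotc x z"
  by (simp add: dotc_def distrib_left sum.distrib)

lemma dotc_add_left: "dotc (x + y) z = dotc x z + dotc y z"
  by (simp add: dotc_def distrib_right sum.distrib)

lemma dotc_scale_right: "dotc x (c *s y) = c * dotc x y"
  by (simp add: dotc_def sum_distrib_left mult.left_commute)

lemma dotc_scale_left: "dotc (c *s x) y = c * dotc x y"
  by (simp add: dotc_def sum_distrib_left mult.assoc)

lemma dotc_minus_right: "dotc x (- y) = - dotc x y"
  by (simp add: dotc_def sum_negf)

lemma dotc_diff_right: "dotc x (y - z) = dotc x y - dotc x z"
  by (simp add: dotc_def right_diff_distrib sum_subtractf)

lemma bounded_bilinear_dotc: "bounded_bilinear (dotc :: complex^'d::finite \<Rightarrow> complex^'d \<Rightarrow> complex)"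
proof -
  have scalar: "r *\<^sub>R (z::complex) = of_real r * z" for r z
    by (simp add: scaleR_conv_of_real)
  have scale: "r *\<^sub>R (x::complex^'d) = (of_real r :: complex) *s x" for r x
    by (simp add: vec_eq_iff scalar)
  have "bilinear (dotc :: complex^'d \<Rightarrow> complex^'d \<Rightarrow> complex)"
    unfolding bilinear_def
    by (auto intro!: linearI simp: dotc_add_left dotc_add_right scale dotc_scale_left
        dotc_scale_right scalar)
  then show ?thesis
    using bilinear_conv_bounded_bilinear by blast
qed

lemma additive_homogeneous_expansion:
  fixes f :: "'a::comm_ring_1^'d::finite \<Rightarrow> 'a"
  assumes add: "\<And>x y. f (x + y) = f x + f y" and scale: "\<And>z x. f (z *s x) = z * f x"
  shows "f c = (\<Sum>a\<in>UNIV. c $ a * f (axis a 1))"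
proof -
  interpret additive f by standard (rule add)
  have "f c = (\<Sum>a\<in>UNIV. f (c $ a *s axis a 1))"
    by (subst basis_expansion[symmetric, of c]) (rule sum)
  then show ?thesis
    by (simp add: scale)
qed

text \<open>Only the invariance of \<open>g\<close> under \<open>R\<close> is needed below: that \<open>[\<cdot>,\<cdot>]\<^sub>R\<close> is a Lie bracket
  (the content of the modified Yang--Baxter equation) is already encoded in the faithful
  representation \<open>\<rho>\<close>.\<close>

locale lie_coordinates =
  fixes e :: "'d::finite \<Rightarrow> complex^'n^'n"
    and R :: "complex^'n^'n \<Rightarrow> complex^'n^'n"
    and \<rho> :: "complex^'n^'n \<Rightarrow> complex^'m^'m"
  assumes basis: "matrix_lie_algebra_basis e"
    and R_closed: "\<And>X. X \<in> gset e \<Longrightarrow> R X \<in> gset e"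
    and rep: "faithful_rep e R \<rho>"
begin

lemma lincomb_inj: "lincomb e c = lincomb e d \<Longrightarrow> c = d"
  using basis lincomb_diff[of e c d] unfolding matrix_lie_algebra_basis_def by force

lemma coords_lincomb [simp]: "coords e (lincomb e c) = c"
  unfolding coords_def by (rule the_equality) (auto dest: lincomb_inj)

lemma lincomb_in_gset [simp]: "lincomb e c \<in> gset e"
  by (simp add: gset_def)

lemma lincomb_coords: "X \<in> gset e \<Longrightarrow> lincomb e (coords e X) = X"
  by (auto simp: gset_def)

lemma brR_in_gset: "X \<in> gset e \<Longrightarrow> Y \<in> gset e \<Longrightarrow> brR R X Y \<in> gset e"
  unfolding brR_def using basis R_closed
  by (intro gset_msc gset_add) (auto simp: matrix_lie_algebra_basis_def)

lemma rho_add: "X \<in> gset e \<Longrightarrow> Y \<in> gset e \<Longrightarrow> \<rho> (X + Y) = \<rho> X + \<rho> Y"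
  using rep by (simp add: faithful_rep_def)

lemma rho_msc: "X \<in> gset e \<Longrightarrow> \<rho> (msc c X) = msc c (\<rho> X)"
  using rep by (simp add: faithful_rep_def msc_def)

lemma rho_brR: "X \<in> gset e \<Longrightarrow> Y \<in> gset e \<Longrightarrow> \<rho> (brR R X Y) = \<rho> X ** \<rho> Y - \<rho> Y ** \<rho> X"
  using rep by (simp add: faithful_rep_def)

lemma rho_inj: "inj_on \<rho> (gset e)"
  using rep by (simp add: faithful_rep_def)

definition emb :: "complex^'d \<Rightarrow> complex^'m^'m" where
  "emb c = \<rho> (lincomb e c)"

definition bracket :: "complex^'d \<Rightarrow> complex^'d \<Rightarrow> complex^'d" where
  "bracket c d = coords e (brR R (lincomb e c) (lincomb e d))"

lemma emb_add: "emb (c + d) = emb c + emb d"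
  by (simp add: emb_def lincomb_add rho_add)

lemma emb_scale: "emb (z *s c) = msc z (emb c)"
  by (simp add: emb_def lincomb_scale rho_msc)

lemma inj_emb: "inj emb"
  using rho_inj lincomb_inj unfolding emb_def by (auto intro!: injI dest: inj_onD)

lemma linear_emb: "linear emb"
proof (rule linearI)
  show "emb (r *\<^sub>R c) = r *\<^sub>R emb c" for r c
  proof -
    have "r *\<^sub>R c = (of_real r :: complex) *s c"
      by (simp add: vec_eq_iff scaleR_conv_of_real[where 'a=complex])
    then show ?thesis
      by (simp add: emb_scale msc_of_real)
  qed
qed (rule emb_add)

lemma emb_bracket: "emb (bracket c d) = emb c ** emb d - emb d ** emb c"
  by (simp add: emb_def bracket_def lincomb_coords brR_in_gset rho_brR)

lemma range_emb: "range emb = \<rho> ` gset e"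
  unfolding emb_def gset_def by auto

lemma bracket_add_left: "bracket (c + c') d = bracket c d + bracket c' d"
  by (rule injD[OF inj_emb]) (simp add: emb_bracket emb_add matrix_add_ldistrib matrix_add_rdistrib)

lemma bracket_scale_left: "bracket (z *s c) d = z *s bracket c d"
  by (rule injD[OF inj_emb])
    (simp add: emb_bracket emb_scale msc_matrix_mult_left msc_matrix_mult_right msc_diff_right)

lemma bracket_antisym: "bracket c d = - bracket d c"
  by (rule injD[OF inj_emb]) (simp add: emb_bracket linear_neg[OF linear_emb])

lemma dotc_bracket_expansion: "dotc x (bracket c d) = (\<Sum>a\<in>UNIV. c $ a * dotc x (bracket (axis a 1) d))"
  by (rule additive_homogeneous_expansion[of "\<lambda>c. dotc x (bracket c d)"])
    (simp_all add: bracket_add_left bracket_scale_left dotc_add_right dotc_scale_right)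

lemma pair_eq_dotc: "pair e \<xi> X = dotc \<xi> (coords e X)"
  by (simp add: pair_def dotc_def)

lemma pair_brR: "pair e \<xi> (brR R (lincomb e c) (lincomb e d)) = dotc \<xi> (bracket c d)"
  by (simp add: pair_eq_dotc bracket_def)

lemma inv_into_emb: "inv_into (gset e) \<rho> (emb c) = lincomb e c"
  unfolding emb_def by (rule inv_into_f_f[OF rho_inj lincomb_in_gset])

lemma adstarR_lincomb: "adstarR e R (lincomb e c) \<xi> = (\<chi> a. dotc \<xi> (bracket (axis a 1) c))"
  by (simp add: adstarR_def pair_eq_dotc bracket_def lincomb_axis)

text \<open>Extending the inverse of \<open>emb\<close> linearly to all matrices makes the Maurer--Cartan
  coordinates differentiable.\<close>

definition emb_inv :: "complex^'m^'m \<Rightarrow> complex^'d" where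
  "emb_inv = (SOME g. linear g \<and> g \<circ> emb = id)"

lemma linear_emb_inv: "linear emb_inv" and emb_inv_emb [simp]: "emb_inv (emb c) = c"
proof -
  have "\<exists>g. linear g \<and> g \<circ> emb = id"
    by (rule linear_injective_left_inverse[OF linear_emb inj_emb])
  then have "linear emb_inv \<and> emb_inv \<circ> emb = id"
    unfolding emb_inv_def by (rule someI_ex)
  then show "linear emb_inv" "emb_inv (emb c) = c"
    by (auto simp: fun_eq_iff)
qed

lemma emb_emb_inv: "X \<in> range emb \<Longrightarrow> emb (emb_inv X) = X"
  by auto

lemma GR_invertible: "A \<in> GR e \<rho> \<Longrightarrow> invertible A"
  unfolding GR_def by force

lemma GR_conjugation:
  assumes "A \<in> GR e \<rho>"
  shows "matrix_inv A ** emb c ** A \<in> range emb"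
proof -
  obtain \<gamma> \<gamma>' where \<gamma>: "\<gamma> 0 = mat 1" "\<gamma> 1 = A" "continuous_on {0..1::real} \<gamma>'"
    "\<And>s. s \<in> {0..1} \<Longrightarrow> (\<gamma> has_vector_derivative \<gamma>' s) (at s within {0..1}) \<and>
        invertible (\<gamma> s) \<and> \<gamma>' s ** matrix_inv (\<gamma> s) \<in> \<rho> ` gset e"
    using assms unfolding GR_def by blast
  have "matrix_inv (\<gamma> 1) ** emb c ** \<gamma> 1 \<in> range emb"
  proof (rule conjugation_invariant_along_path[where P = "\<lambda>X. X - emb (emb_inv X)"])
    show "linear (\<lambda>X. X - emb (emb_inv X))"
      by (intro linear_compose_sub linear_ident linear_compose[OF linear_emb_inv linear_emb, unfolded o_def])
    show "X - emb (emb_inv X) = 0 \<longleftrightarrow> X \<in> range emb" for X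
      by (metis emb_emb_inv eq_iff_diff_eq_0 rangeI)
    show "X ** Y - Y ** X \<in> range emb" if "X \<in> range emb" "Y \<in> range emb" for X Y
      using that by (auto simp flip: emb_bracket)
  qed (use \<gamma> range_emb in auto)
  then show ?thesis
    using \<gamma>(2) by simp
qed

end

lemma smooth_on_differentiable: "smooth_on S f \<Longrightarrow> x \<in> S \<Longrightarrow> f differentiable (at x)"
  unfolding smooth_on_def by (metis dd.simps(1))

lemma smooth_on_tpartial_differentiable: "smooth_on S f \<Longrightarrow> x \<in> S \<Longrightarrow> tpartial f k differentiable (at x)"
  unfolding smooth_on_def by (metis dd.simps tpartial_def ext)

lemma tpartial_eq: "(f has_derivative f') (at t) \<Longrightarrow> tpartial f l t = f' (axis l 1)"
  by (metis frechet_derivative_at tpartial_def)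

lemma tpartial_bounded_linear:
  assumes "bounded_linear g" and "f differentiable (at t)"
  shows "tpartial (\<lambda>t. g (f t)) l t = g (tpartial f l t)"
  using tpartial_eq[OF bounded_linear.has_derivative[OF assms(1)
        assms(2)[unfolded frechet_derivative_works]]]
  by (simp add: tpartial_def)


section \<open>The Lagrangian one-form along a solution\<close>

locale lagrangian_solution = lie_coordinates e R \<rho>
  for e :: "'d::finite \<Rightarrow> complex^'n^'n"
    and R :: "complex^'n^'n \<Rightarrow> complex^'n^'n"
    and \<rho> :: "complex^'n^'n \<Rightarrow> complex^'m^'m" +
  fixes \<Lambda> :: "complex^'d"
    and H :: "'N::finite \<Rightarrow> complex^'d \<Rightarrow> complex"
    and \<phi> :: "real^'N \<Rightarrow> complex^'m^'m"
    and U :: "(complex^'c) set"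
    and \<chi>' :: "complex^'c \<Rightarrow> complex^'d"
    and \<omega> :: "complex^'c \<Rightarrow> 'c \<Rightarrow> 'c \<Rightarrow> complex"
    and \<xi> :: "real^'N \<Rightarrow> complex^'c"
  assumes H: "\<And>k. holo_scalar_on UNIV (H k)"
    and phi_smooth: "smooth_on UNIV \<phi>"
    and phi_GR: "\<And>t. \<phi> t \<in> GR e \<rho>"
    and phi_MC: "\<And>t k. tpartial \<phi> k t ** matrix_inv (\<phi> t) \<in> \<rho> ` gset e"
    and chart: "orbit_chart e R \<rho> \<Lambda> U \<chi>'"
    and KKS: "KKS_coeffs e R U \<chi>' \<omega>"
    and xi_smooth: "smooth_on UNIV \<xi>"
    and xi_U: "\<And>t. \<xi> t \<in> U"
    and xi_L: "\<And>t. \<chi>' (\<xi> t) = Lfield e \<rho> \<Lambda> \<phi> t"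
    and EL: "\<And>k n t. Upsilon \<chi>' \<omega> H \<xi> k n t = 0"
begin

abbreviation L :: "real^'N \<Rightarrow> complex^'d" where
  "L \<equiv> Lfield e \<rho> \<Lambda> \<phi>"

definition psi :: "real^'N \<Rightarrow> complex^'m^'m" where
  "psi t = matrix_inv (\<phi> t)"

definition Ad_inv :: "real^'N \<Rightarrow> complex^'d \<Rightarrow> complex^'d" where
  "Ad_inv t c = emb_inv (psi t ** emb c ** \<phi> t)"

definition mc :: "'N \<Rightarrow> real^'N \<Rightarrow> complex^'d" where
  "mc k t = emb_inv (tpartial \<phi> k t ** psi t)"

lemma invertible_phi: "invertible (\<phi> t)"
  using GR_invertible[OF phi_GR] .

lemma psi_phi: "psi t ** \<phi> t = mat 1"
  unfolding psi_def using matrix_inv_left[OF invertible_phi] .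

lemma emb_Ad_inv: "emb (Ad_inv t c) = psi t ** emb c ** \<phi> t"
  unfolding Ad_inv_def psi_def by (rule emb_emb_inv[OF GR_conjugation[OF phi_GR]])

lemma Ad_inv_add: "Ad_inv t (c + d) = Ad_inv t c + Ad_inv t d"
  by (rule injD[OF inj_emb]) (simp add: emb_Ad_inv emb_add matrix_add_ldistrib matrix_add_rdistrib)

lemma Ad_inv_scale: "Ad_inv t (z *s c) = z *s Ad_inv t c"
  by (rule injD[OF inj_emb]) (simp add: emb_Ad_inv emb_scale msc_matrix_mult_left msc_matrix_mult_right)

lemma emb_mc: "emb (mc k t) = tpartial \<phi> k t ** psi t"
  unfolding mc_def psi_def using phi_MC unfolding range_emb[symmetric] by (rule emb_emb_inv)

lemma MC_eq: "MC e \<rho> \<phi> k t = lincomb e (mc k t)"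
proof -
  have "MC e \<rho> \<phi> k t = inv_into (gset e) \<rho> (emb (mc k t))"
    by (simp add: MC_def emb_mc psi_def)
  then show ?thesis
    by (simp add: inv_into_emb)
qed

lemma L_nth: "L t $ a = dotc \<Lambda> (Ad_inv t (axis a 1))"
proof -
  have "emb (Ad_inv t (axis a 1)) = matrix_inv (\<phi> t) ** \<rho> (e a) ** matrix_inv (matrix_inv (\<phi> t))"
    by (simp add: emb_Ad_inv psi_def matrix_inv_matrix_inv[OF invertible_phi])
      (simp add: emb_def lincomb_axis)
  then have "AdR e \<rho> (matrix_inv (\<phi> t)) (e a) = lincomb e (Ad_inv t (axis a 1))"
    unfolding AdR_def by (metis inv_into_emb)
  then show ?thesis
    by (simp add: Lfield_def coadR_def pair_eq_dotc)
qed

lemma dotc_L: "dotc (L t) c = dotc \<Lambda> (Ad_inv t c)"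
proof -
  have "dotc \<Lambda> (Ad_inv t c) = (\<Sum>a\<in>UNIV. c $ a * dotc \<Lambda> (Ad_inv t (axis a 1)))"
    by (rule additive_homogeneous_expansion)
      (simp_all add: Ad_inv_add Ad_inv_scale dotc_add_right dotc_scale_right)
  then show ?thesis
    by (simp add: L_nth dotc_def mult.commute)
qed

abbreviation "d\<phi> t \<equiv> frechet_derivative \<phi> (at t)"
abbreviation "d\<xi> t \<equiv> frechet_derivative \<xi> (at t)"
abbreviation "d\<chi> t \<equiv> frechet_derivative \<chi>' (at (\<xi> t))"

lemma has_derivative_phi: "(\<phi> has_derivative d\<phi> t) (at t)"
  using smooth_on_differentiable[OF phi_smooth UNIV_I] frechet_derivative_works by blast

lemma has_derivative_psi: "(psi has_derivative (\<lambda>h. - (psi t ** d\<phi> t h ** psi t))) (at t)"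
  unfolding psi_def[abs_def]
  using has_derivative_matrix_inv[OF has_derivative_phi UNIV_I invertible_phi] .

lemma has_derivative_conjugate:
  "((\<lambda>t. psi t ** Y ** \<phi> t) has_derivative
     (\<lambda>h. psi t ** Y ** d\<phi> t h - psi t ** d\<phi> t h ** psi t ** Y ** \<phi> t)) (at t)"
proof -
  note mult = bounded_bilinear_matrix_mult
  have "((\<lambda>t. psi t ** Y ** \<phi> t) has_derivative (\<lambda>h. (psi t ** Y) ** d\<phi> t h
      + (psi t ** 0 + (- (psi t ** d\<phi> t h ** psi t)) ** Y) ** \<phi> t)) (at t)"
    by (rule bounded_bilinear.FDERIV[OF mult bounded_bilinear.FDERIV[OF mult has_derivative_psi
          has_derivative_const] has_derivative_phi])
  then show ?thesis
    by (simp add: matrix_neg_left matrix_mul_assoc)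
qed

lemma tpartial_conjugate:
  "tpartial (\<lambda>t. psi t ** Y ** \<phi> t) l t
     = psi t ** Y ** tpartial \<phi> l t - psi t ** tpartial \<phi> l t ** psi t ** Y ** \<phi> t"
  by (simp add: tpartial_eq[OF has_derivative_conjugate] tpartial_def[of \<phi>])

lemma holo_chi: "holo_vec_on U \<chi>'"
  using chart by (simp add: orbit_chart_def)

lemma chi_differentiable: "\<chi>' differentiable (at (\<xi> t))"
  by (rule smooth_on_differentiable[OF _ xi_U]) (use holo_chi in \<open>simp add: holo_vec_on_def\<close>)

lemma has_derivative_L: "(L has_derivative (\<lambda>h. d\<chi> t (d\<xi> t h))) (at t)"
proof -
  note chi_differentiable
  moreover have "\<xi> differentiable (at t)"
    using smooth_on_differentiable[OF xi_smooth UNIV_I] .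
  ultimately have "((\<chi>' \<circ> \<xi>) has_derivative (d\<chi> t \<circ> d\<xi> t)) (at t)"
    by (intro diff_chain_at) (simp_all add: frechet_derivative_works[symmetric])
  moreover have "\<chi>' \<circ> \<xi> = L"
    by (simp add: fun_eq_iff xi_L)
  ultimately show ?thesis
    by (simp add: o_def)
qed

lemma tpartial_L: "tpartial L l t = d\<chi> t (tpartial \<xi> l t)"
  using tpartial_eq[OF has_derivative_L] by (simp only: tpartial_def[of \<xi>])

lemma tpartial_L_nth: "tpartial L l t $ a = dotc (L t) (bracket (axis a 1) (mc l t))"
proof -
  define Y where "Y = emb (axis a 1)"
  have lin: "bounded_linear (\<lambda>X. dotc \<Lambda> (emb_inv X))"
    using linear_emb_inv
    by (intro bounded_linear_compose[OF bounded_bilinear.bounded_linear_right[OF bounded_bilinear_dotc]])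
      (simp add: linear_conv_bounded_linear)
  have "(\<lambda>t. L t $ a) = (\<lambda>t. dotc \<Lambda> (emb_inv (psi t ** Y ** \<phi> t)))"
    by (simp add: fun_eq_iff L_nth Ad_inv_def Y_def)
  then have "tpartial (\<lambda>t. L t $ a) l t = dotc \<Lambda> (emb_inv (tpartial (\<lambda>t. psi t ** Y ** \<phi> t) l t))"
    using tpartial_bounded_linear[OF lin differentiableI[OF has_derivative_conjugate]] by simp
  also have "\<dots> = dotc \<Lambda> (Ad_inv t (bracket (axis a 1) (mc l t)))"
  proof -
    have "emb (Ad_inv t (bracket (axis a 1) (mc l t)))
        = psi t ** (Y ** (tpartial \<phi> l t ** psi t) - (tpartial \<phi> l t ** psi t) ** Y) ** \<phi> t"
      by (simp add: emb_Ad_inv emb_bracket emb_mc Y_def)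
    also have "\<dots> = psi t ** Y ** tpartial \<phi> l t ** (psi t ** \<phi> t)
        - psi t ** tpartial \<phi> l t ** psi t ** Y ** \<phi> t"
      by (simp add: matrix_diff_ldistrib matrix_diff_rdistrib matrix_mul_assoc)
    also have "\<dots> = tpartial (\<lambda>t. psi t ** Y ** \<phi> t) l t"
      by (simp add: psi_phi tpartial_conjugate)
    finally show ?thesis
      by (metis emb_inv_emb)
  qed
  also have "\<dots> = dotc (L t) (bracket (axis a 1) (mc l t))"
    by (simp add: dotc_L)
  finally show ?thesis
    using tpartial_bounded_linear[OF bounded_linear_vec_nth differentiableI[OF has_derivative_L]]
    by simp
qed



lemma tpartial_L_adstar: "tpartial L l t = adstarR e R (MC e \<rho> \<phi> l t) (L t)"
  by (simp add: vec_eq_iff tpartial_L_nth MC_eq adstarR_lincomb)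

lemma has_derivative_mc_matrix:
  "((\<lambda>t. tpartial \<phi> k t ** psi t) has_derivative (\<lambda>h.
      frechet_derivative (tpartial \<phi> k) (at t) h ** psi t - tpartial \<phi> k t ** psi t ** d\<phi> t h ** psi t)) (at t)"
proof -
  have "((\<lambda>t. tpartial \<phi> k t ** psi t) has_derivative (\<lambda>h. tpartial \<phi> k t ** (- (psi t ** d\<phi> t h ** psi t))
      + frechet_derivative (tpartial \<phi> k) (at t) h ** psi t)) (at t)"
    using smooth_on_tpartial_differentiable[OF phi_smooth UNIV_I]
    by (intro bounded_bilinear.FDERIV[OF bounded_bilinear_matrix_mult _ has_derivative_psi])
      (simp add: frechet_derivative_works)
  then show ?thesis
    by (simp add: matrix_neg_right matrix_mul_assoc)
qed

lemma bounded_linear_emb_inv: "bounded_linear emb_inv"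
  using linear_emb_inv by (simp add: linear_conv_bounded_linear)

lemma mc_differentiable: "mc k differentiable (at t)"
  unfolding mc_def[abs_def]
  by (rule differentiableI[OF bounded_linear.has_derivative[OF bounded_linear_emb_inv has_derivative_mc_matrix]])

lemma tpartial_mc: "tpartial (mc k) l t
    = emb_inv (tpartial (tpartial \<phi> k) l t ** psi t - tpartial \<phi> k t ** psi t ** tpartial \<phi> l t ** psi t)"
proof -
  have "tpartial (mc k) l t = emb_inv (tpartial (\<lambda>t. tpartial \<phi> k t ** psi t) l t)"
    unfolding mc_def[abs_def]
    by (rule tpartial_bounded_linear[OF bounded_linear_emb_inv differentiableI[OF has_derivative_mc_matrix]])
  then show ?thesis
    using tpartial_eq[OF has_derivative_mc_matrix] by (simp add: tpartial_def)
qed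

lemma mc_zero_curvature: "tpartial (mc k) l t - tpartial (mc l) k t = bracket (mc l t) (mc k t)"
proof -
  have "(\<lambda>y. d\<phi> y (axis k 1)) = tpartial \<phi> k" for k
    by (simp add: fun_eq_iff tpartial_def)
  moreover have "(tpartial \<phi> k has_derivative frechet_derivative (tpartial \<phi> k) (at t)) (at t)" for k
    using smooth_on_tpartial_differentiable[OF phi_smooth UNIV_I] by (simp add: frechet_derivative_works)
  ultimately have "frechet_derivative (tpartial \<phi> k) (at t) (axis l 1)
      = frechet_derivative (tpartial \<phi> l) (at t) (axis k 1)"
    by (intro second_derivative_symmetric[OF has_derivative_phi]) simp_all
  then have "tpartial (tpartial \<phi> k) l t = tpartial (tpartial \<phi> l) k t"
    by (simp only: tpartial_def[of "tpartial \<phi> k"] tpartial_def[of "tpartial \<phi> l"])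
  then have "tpartial (mc k) l t - tpartial (mc l) k t
      = emb_inv (emb (mc l t) ** emb (mc k t) - emb (mc k t) ** emb (mc l t))"
    by (simp add: tpartial_mc emb_mc linear_diff[OF linear_emb_inv] matrix_mul_assoc)
  then show ?thesis
    by (simp flip: emb_bracket)
qed

abbreviation "dH k x \<equiv> frechet_derivative (H k) (at x)"

lemma has_derivative_H: "(H k has_derivative dH k x) (at x)"
  using H[of k] smooth_on_differentiable frechet_derivative_works
  unfolding holo_scalar_on_def by blast

lemma dH_scale: "dH k x (c *s v) = c * dH k x v"
  using H[of k] unfolding holo_scalar_on_def by blast

lemma dH_add: "dH k x (v + w) = dH k x v + dH k x w"
  using linear_add[OF has_derivative_linear[OF has_derivative_H]] .

lemma dchi_scale: "d\<chi> t (c *s v) = c *s d\<chi> t v"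
  using holo_chi xi_U unfolding holo_vec_on_def by blast

lemma dchi_add: "d\<chi> t (v + w) = d\<chi> t v + d\<chi> t w"
  using linear_add[OF linear_frechet_derivative[OF chi_differentiable]] .

lemma tpartial_Lag:
  "tpartial (Lag e \<rho> \<Lambda> H \<phi> k) l t
     = dotc (L t) (tpartial (mc k) l t) + dotc (tpartial L l t) (mc k t) - dH k (L t) (tpartial L l t)"
proof -
  have Lag: "Lag e \<rho> \<Lambda> H \<phi> k = (\<lambda>t. dotc (L t) (mc k t) - H k (L t))"
    by (simp add: fun_eq_iff Lag_def pair_eq_dotc MC_eq)
  have dL: "(L has_derivative frechet_derivative L (at t)) (at t)"
    using differentiableI[OF has_derivative_L] frechet_derivative_works by blast
  have dmc: "(mc k has_derivative frechet_derivative (mc k) (at t)) (at t)"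
    using mc_differentiable frechet_derivative_works by blast
  have "((\<lambda>t. dotc (L t) (mc k t) - H k (L t)) has_derivative
      (\<lambda>h. (dotc (L t) (frechet_derivative (mc k) (at t) h) + dotc (frechet_derivative L (at t) h) (mc k t))
        - dH k (L t) (frechet_derivative L (at t) h))) (at t)"
    by (intro has_derivative_diff bounded_bilinear.FDERIV[OF bounded_bilinear_dotc dL dmc]
        has_derivative_compose[OF dL has_derivative_H])
  from tpartial_eq[OF this, of l] show ?thesis
    unfolding Lag by (simp add: tpartial_def)
qed


definition kks :: "real^'N \<Rightarrow> complex^'c \<Rightarrow> complex^'c \<Rightarrow> complex" where
  "kks t v w = (\<Sum>m\<in>UNIV. \<Sum>n\<in>UNIV. \<omega> (\<xi> t) m n * v $ m * w $ n)"

lemma dH_dchi_eq_kks: "dH k (L t) (d\<chi> t w) = kks t (tpartial \<xi> k t) w"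
proof -
  have "frechet_derivative (H k \<circ> \<chi>') (at (\<xi> t)) = dH k (\<chi>' (\<xi> t)) \<circ> d\<chi> t"
    by (rule frechet_derivative_compose[OF chi_differentiable differentiableI[OF has_derivative_H]])
  then have "frechet_derivative (H k \<circ> \<chi>') (at (\<xi> t)) = dH k (L t) \<circ> d\<chi> t"
    by (simp add: xi_L)
  then have EL': "dH k (L t) (d\<chi> t (axis n 1)) = (\<Sum>m\<in>UNIV. \<omega> (\<xi> t) m n * tpartial \<xi> k t $ m)" for n
    using EL[of k n t] by (simp add: Upsilon_def)
  have "dH k (L t) (d\<chi> t w) = (\<Sum>n\<in>UNIV. w $ n * dH k (L t) (d\<chi> t (axis n 1)))"
    by (rule additive_homogeneous_expansion[of "\<lambda>w. dH k (L t) (d\<chi> t w)"])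
      (simp_all add: dchi_add dH_add dchi_scale dH_scale)
  also have "\<dots> = kks t (tpartial \<xi> k t) w"
    unfolding EL' kks_def sum_distrib_left by (subst sum.swap) (simp only: ac_simps)
  finally show ?thesis .
qed

lemma kks_adstar:
  assumes "d\<chi> t v = adstarR e R (lincomb e x) (L t)" and "d\<chi> t w = adstarR e R (lincomb e y) (L t)"
  shows "kks t v w = dotc (L t) (bracket x y)"
proof -
  have "\<forall>X\<in>gset e. \<forall>Y\<in>gset e. \<forall>v w. d\<chi> t v = adstarR e R X (\<chi>' (\<xi> t))
      \<longrightarrow> d\<chi> t w = adstarR e R Y (\<chi>' (\<xi> t)) \<longrightarrow> kks t v w = pair e (\<chi>' (\<xi> t)) (brR R X Y)"
    using bspec[OF KKS[unfolded KKS_coeffs_def] xi_U] unfolding kks_def by blast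
  from this[unfolded xi_L, rule_format, OF lincomb_in_gset lincomb_in_gset assms] show ?thesis
    by (simp add: pair_brR)
qed

lemma dchi_tpartial_xi: "d\<chi> t (tpartial \<xi> k t) = adstarR e R (lincomb e (mc k t)) (L t)"
  using tpartial_L[of k t] tpartial_L_adstar[of k t] by (simp add: MC_eq)

lemma dH_tpartial_L: "dH k (L t) (tpartial L l t) = dotc (L t) (bracket (mc k t) (mc l t))"
  unfolding tpartial_L dH_dchi_eq_kks by (rule kks_adstar[OF dchi_tpartial_xi dchi_tpartial_xi])

definition grad_H :: "'N \<Rightarrow> real^'N \<Rightarrow> complex^'d" where
  "grad_H k t = (\<chi> a. dH k (L t) (axis a 1))"

lemma PBR_eq: "PBR e R (H k) (H l) (L t) = dotc (L t) (bracket (grad_H k t) (grad_H l t))"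
  by (simp add: PBR_def grad_def grad_H_def pair_brR)

text \<open>Every tangent vector \<open>ad*(Y) L\<close> of the orbit is \<open>d\<chi> w\<close> for some \<open>w\<close>, and on it
  \<open>dH\<^sub>k\<close> is both \<open>\<omega>\<^sub>R(ad*(m\<^sub>k) L, ad*(Y) L)\<close> (Euler--Lagrange) and
  \<open>(L, [\<nabla>H\<^sub>k, Y]\<^sub>R)\<close> (by linearity).\<close>

lemma dotc_bracket_mc_eq_grad_H: "dotc (L t) (bracket (mc k t) y) = dotc (L t) (bracket (grad_H k t) y)"
proof -
  have "range (d\<chi> t) = {adstarR e R X (\<chi>' (\<xi> t)) | X. X \<in> gset e}"
    using bspec[OF chart[unfolded orbit_chart_def, THEN conjunct2, THEN conjunct2, THEN conjunct2,
          THEN conjunct2] xi_U] by (rule conjunct2)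
  then have "adstarR e R (lincomb e y) (L t) \<in> range (d\<chi> t)"
    unfolding xi_L using lincomb_in_gset by blast
  then obtain w where w: "d\<chi> t w = adstarR e R (lincomb e y) (L t)"
    by auto
  have "dotc (L t) (bracket (mc k t) y) = dH k (L t) (d\<chi> t w)"
    unfolding dH_dchi_eq_kks by (rule kks_adstar[OF dchi_tpartial_xi w, symmetric])
  also have "\<dots> = (\<Sum>a\<in>UNIV. (d\<chi> t w) $ a * dH k (L t) (axis a 1))"
    by (rule additive_homogeneous_expansion) (simp_all add: dH_add dH_scale)
  also have "\<dots> = (\<Sum>a\<in>UNIV. grad_H k t $ a * dotc (L t) (bracket (axis a 1) y))"
    unfolding w adstarR_lincomb by (simp add: grad_H_def mult.commute)
  also have "\<dots> = dotc (L t) (bracket (grad_H k t) y)"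
    by (rule dotc_bracket_expansion[symmetric])
  finally show ?thesis .
qed

lemma dotc_tpartial_L_mc: "dotc (tpartial L l t) (mc k t) = dotc (L t) (bracket (mc k t) (mc l t))"
proof -
  have "dotc (tpartial L l t) (mc k t) = (\<Sum>a\<in>UNIV. mc k t $ a * dotc (L t) (bracket (axis a 1) (mc l t)))"
    by (simp add: dotc_def tpartial_L_nth mult.commute)
  also have "\<dots> = dotc (L t) (bracket (mc k t) (mc l t))"
    by (rule dotc_bracket_expansion[symmetric])
  finally show ?thesis .
qed

theorem curl_Lag_eq_PBR:
  "tpartial (Lag e \<rho> \<Lambda> H \<phi> k) l t - tpartial (Lag e \<rho> \<Lambda> H \<phi> l) k t = - PBR e R (H k) (H l) (L t)"
proof -
  have "tpartial (Lag e \<rho> \<Lambda> H \<phi> k) l t - tpartial (Lag e \<rho> \<Lambda> H \<phi> l) k t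
      = dotc (L t) (tpartial (mc k) l t - tpartial (mc l) k t)"
    by (simp add: tpartial_Lag dotc_tpartial_L_mc dH_tpartial_L dotc_diff_right)
  also have "\<dots> = - dotc (L t) (bracket (mc k t) (mc l t))"
    by (subst bracket_antisym) (simp add: mc_zero_curvature dotc_minus_right)
  also have "dotc (L t) (bracket (mc k t) (mc l t)) = - dotc (L t) (bracket (mc l t) (grad_H k t))"
    by (subst bracket_antisym) (simp add: dotc_bracket_mc_eq_grad_H dotc_minus_right)
  also have "dotc (L t) (bracket (mc l t) (grad_H k t)) = - dotc (L t) (bracket (grad_H k t) (grad_H l t))"
    by (subst bracket_antisym) (simp add: dotc_bracket_mc_eq_grad_H dotc_minus_right)
  finally show ?thesis
    by (simp add: PBR_eq)
qed

end

theorem mainTheorem6: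
  fixes e :: "'d::finite \<Rightarrow> complex^'n^'n"
    and R :: "complex^'n^'n \<Rightarrow> complex^'n^'n"
    and \<rho> :: "complex^'n^'n \<Rightarrow> complex^'m^'m"
    and \<Lambda> :: "complex^'d"
    and H :: "'N::finite \<Rightarrow> complex^'d \<Rightarrow> complex"
    and \<phi> :: "real^'N \<Rightarrow> complex^'m^'m"
    and U :: "(complex^'c) set"
    and \<chi>' :: "complex^'c \<Rightarrow> complex^'d"
    and \<omega> :: "complex^'c \<Rightarrow> 'c \<Rightarrow> 'c \<Rightarrow> complex"
    and \<xi> :: "real^'N \<Rightarrow> complex^'c"
  assumes g: "matrix_lie_algebra_basis e"
    and R: "mCYBE e R"
    and rep: "faithful_rep e R \<rho>"
    and H: "\<And>k. holo_scalar_on UNIV (H k)"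
    and phi_smooth: "smooth_on UNIV \<phi>"
    and phi_GR: "\<And>t. \<phi> t \<in> GR e \<rho>"
    and phi_MC: "\<And>t k. tpartial \<phi> k t ** matrix_inv (\<phi> t) \<in> \<rho> ` gset e"
    and chart: "orbit_chart e R \<rho> \<Lambda> U \<chi>'"
    and KKS: "KKS_coeffs e R U \<chi>' \<omega>"
    and xi_smooth: "smooth_on UNIV \<xi>"
    and xi_U: "\<And>t. \<xi> t \<in> U"
    and xi_L: "\<And>t. \<chi>' (\<xi> t) = Lfield e \<rho> \<Lambda> \<phi> t"
    and EL: "\<And>k n t. Upsilon \<chi>' \<omega> H \<xi> k n t = 0"
  shows "(\<forall>k l t. tpartial (Lag e \<rho> \<Lambda> H \<phi> k) l t - tpartial (Lag e \<rho> \<Lambda> H \<phi> l) k t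
                  = - PBR e R (H k) (H l) (Lfield e \<rho> \<Lambda> \<phi> t))
       \<and> ((\<forall>k l t. tpartial (Lag e \<rho> \<Lambda> H \<phi> k) l t = tpartial (Lag e \<rho> \<Lambda> H \<phi> l) k t)
          \<longleftrightarrow> (\<forall>k l t. PBR e R (H k) (H l) (Lfield e \<rho> \<Lambda> \<phi> t) = 0))"
proof -
  interpret lagrangian_solution e R \<rho> \<Lambda> H \<phi> U \<chi>' \<omega> \<xi>
  proof
    show "R X \<in> gset e" if "X \<in> gset e" for X
      using R that by (simp add: mCYBE_def)
  qed (fact g rep H phi_smooth phi_GR phi_MC chart KKS xi_smooth xi_U xi_L EL)+
  have "(tpartial (Lag e \<rho> \<Lambda> H \<phi> k) l t = tpartial (Lag e \<rho> \<Lambda> H \<phi> l) k t)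
      \<longleftrightarrow> PBR e R (H k) (H l) (L t) = 0" for k l t
    using curl_Lag_eq_PBR[of k l t] by (metis eq_iff_diff_eq_0 neg_equal_0_iff_equal)
  then show ?thesis
    using curl_Lag_eq_PBR by blast
qed

end
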